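(* Let $X$ be a nontrivial real Banach space. The following assertions are equivalent: (i) $X^*$ has the weak$^*$ strong diameter $2$ property; (ii) $X$ is octahedral; (iii) whenever $E$ is a finite-dimensional subspace of $X$, $n\in\mathbb{N}$, $x_1^*,\dots,x_n^*\in B_{X^*}$, $\varepsilon>0$, and $\varepsilon_0\in(0,\varepsilon)$, there is a $y\in S_X$ such that, whenever $|\gamma_i|\leq 1+\varepsilon_0$ for $i\in\{1,\dots,n\}$, there are $y_i^*\in X^*$ satisfying $y_i^*|_E=x_i^*|_E$, $y_i^*(y)=\gamma_i$, and $\|y_i^*\|\leq 1+\varepsilon$ for all $i\in\{1,\dots,n\}$; (iii') whenever $E$ is a finite-dimensional subspace of $X$, $n\in\mathbb{N}$, $x_1^*,\dots,x_n^*\in B_{X^*}$, and $\varepsilon>0$, there are $y\in S_X$ and $x_{1i}^*,x_{2i}^*\in X^*$, $i\in\{1,\dots,n\}$, satisfying $x_{1i}^*|_E=x_{2i}^*|_E=x_i^*|_E$, $x_{1i}^*(y)-x_{2i}^*(y)>2-\varepsilon$, and $\|x_{1i}^*\|,\|x_{2i}^*\|\leq 1+\varepsilon$ for all $i\in\{1,\dots,n\}$.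
   Context: $B_Z$, $S_Z$ denote the closed unit ball and unit sphere of a Banach space $Z$. A weak$^*$ slice of $B_{X^*}$ is a set $\{x^*\in B_{X^*}: x^*(x)>1-\alpha\}$ with $x\in S_X$, $\alpha>0$. $X^*$ has the weak$^*$ strong diameter $2$ property if every convex combination $\sum_{i=1}^n\lambda_i S_i$ ($n\in\mathbb{N}$, $\lambda_i\ge0$, $\sum\lambda_i=1$, $S_i$ weak$^*$ slices of $B_{X^*}$) has diameter $2$. $X$ is octahedral if for every finite-dimensional subspace $E$ of $X$ and every $\varepsilon>0$ there is a $y\in S_X$ such that $\|x+y\|\geq(1-\varepsilon)(\|x\|+\|y\|)$ for all $x\in E$. *)

theory Defs
  imports "HOL-Analysis.Analysis"
begin

text \<open>The dual space X* is rendered as the type of bounded linear functionals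
  of type blinfun from the reals, with the operator norm.\<close>

definition fin_dim_subspace :: "'a::real_vector set \<Rightarrow> bool" where
  "fin_dim_subspace E \<longleftrightarrow> (\<exists>B. finite B \<and> E = span B)"

definition weak_star_slice :: "'a::real_normed_vector \<Rightarrow> real \<Rightarrow> ('a \<Rightarrow>\<^sub>L real) set" where
  "weak_star_slice x \<alpha> = {f. norm f \<le> 1 \<and> blinfun_apply f x > 1 - \<alpha>}"

definition w_star_SD2P :: "'a::real_normed_vector itself \<Rightarrow> bool" where
  "w_star_SD2P _ \<longleftrightarrow>
     (\<forall>(n::nat) (lam::nat \<Rightarrow> real) (x::nat \<Rightarrow> 'a) (\<alpha>::nat \<Rightarrow> real).
        n \<ge> 1 \<and> (\<forall>i\<in>{1..n}. lam i \<ge> 0) \<and> (\<Sum>i=1..n. lam i) = 1 \<and>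
        (\<forall>i\<in>{1..n}. norm (x i) = 1 \<and> \<alpha> i > 0) \<longrightarrow>
        diameter {\<Sum>i=1..n. lam i *\<^sub>R f i | f. \<forall>i\<in>{1..n}. f i \<in> weak_star_slice (x i) (\<alpha> i)} = 2)"

definition octahedral :: "'a::real_normed_vector itself \<Rightarrow> bool" where
  "octahedral _ \<longleftrightarrow>
     (\<forall>(E::'a set) (\<epsilon>::real). fin_dim_subspace E \<and> \<epsilon> > 0 \<longrightarrow>
        (\<exists>y. norm y = 1 \<and> (\<forall>x\<in>E. norm (x + y) \<ge> (1 - \<epsilon>) * (norm x + norm y))))"

definition prop_iii :: "'a::real_normed_vector itself \<Rightarrow> bool" where
  "prop_iii _ \<longleftrightarrow>
     (\<forall>(E::'a set) (n::nat) (xs::nat \<Rightarrow> ('a \<Rightarrow>\<^sub>L real)) (\<epsilon>::real) (\<epsilon>0::real).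
        fin_dim_subspace E \<and> n \<ge> 1 \<and> (\<forall>i\<in>{1..n}. norm (xs i) \<le> 1) \<and>
        \<epsilon> > 0 \<and> 0 < \<epsilon>0 \<and> \<epsilon>0 < \<epsilon> \<longrightarrow>
        (\<exists>y. norm y = 1 \<and>
           (\<forall>\<gamma>::nat \<Rightarrow> real. (\<forall>i\<in>{1..n}. \<bar>\<gamma> i\<bar> \<le> 1 + \<epsilon>0) \<longrightarrow>
              (\<exists>ys::nat \<Rightarrow> ('a \<Rightarrow>\<^sub>L real). \<forall>i\<in>{1..n}.
                  (\<forall>e\<in>E. blinfun_apply (ys i) e = blinfun_apply (xs i) e) \<and>
                  blinfun_apply (ys i) y = \<gamma> i \<and> norm (ys i) \<le> 1 + \<epsilon>))))"

definition prop_iii' :: "'a::real_normed_vector itself \<Rightarrow> bool" where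
  "prop_iii' _ \<longleftrightarrow>
     (\<forall>(E::'a set) (n::nat) (xs::nat \<Rightarrow> ('a \<Rightarrow>\<^sub>L real)) (\<epsilon>::real).
        fin_dim_subspace E \<and> n \<ge> 1 \<and> (\<forall>i\<in>{1..n}. norm (xs i) \<le> 1) \<and> \<epsilon> > 0 \<longrightarrow>
        (\<exists>y (x1::nat \<Rightarrow> ('a \<Rightarrow>\<^sub>L real)) (x2::nat \<Rightarrow> ('a \<Rightarrow>\<^sub>L real)).
           norm y = 1 \<and>
           (\<forall>i\<in>{1..n}.
              (\<forall>e\<in>E. blinfun_apply (x1 i) e = blinfun_apply (xs i) e) \<and>
              (\<forall>e\<in>E. blinfun_apply (x2 i) e = blinfun_apply (xs i) e) \<and>
              blinfun_apply (x1 i) y - blinfun_apply (x2 i) y > 2 - \<epsilon> \<and>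
              norm (x1 i) \<le> 1 + \<epsilon> \<and> norm (x2 i) \<le> 1 + \<epsilon>)))"

end

theory Submission
  imports Defs
begin

text \<open>The implications run (ii) \<open>\<Longrightarrow>\<close> (iii) \<open>\<Longrightarrow>\<close> (iii') \<open>\<Longrightarrow>\<close> (i) \<open>\<Longrightarrow>\<close> (ii).
  If \<open>y\<close> is an almost octahedral direction for \<open>E\<close>, then \<open>\<parallel>e + t y\<parallel> \<ge> (1 - \<delta>) (\<parallel>e\<parallel> + \<bar>t\<bar>)\<close>
  for \<open>e \<in> E\<close>, so keeping \<open>x\<^sub>i\<^sup>*\<close> on \<open>E\<close> and prescribing any value of modulus at most
  \<open>1 + \<epsilon>\<^sub>0\<close> at \<open>y\<close> gives a functional of norm at most \<open>1 + \<epsilon>\<close> on \<open>E + \<real> y\<close>, which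
  Hahn--Banach extends to \<open>X\<close>; the values \<open>\<plusminus>(1 + \<epsilon>/2)\<close> then give (iii'). Given (iii'),
  the functionals \<open>x\<^sub>1\<^sub>i\<^sup>*\<close>, \<open>x\<^sub>2\<^sub>i\<^sup>*\<close> built from norming functionals of the slice centres, scaled by
  \<open>1 / (1 + \<epsilon>)\<close>, lie in the slices, and their convex combinations are almost \<open>2\<close> apart at
  \<open>y\<close>. Conversely, two almost antipodal points of an equally weighted combination of slices
  centred at \<open>x\<^sub>1, \<dots>, x\<^sub>n\<close> are almost antipodal at some unit vector \<open>y\<close>, and averaging
  forces \<open>\<parallel>x\<^sub>i + y\<parallel> \<approx> 2\<close> for every \<open>i\<close>; a finite net of the unit sphere of \<open>E\<close> upgrades
  this to octahedrality.\<close>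

section \<open>Hahn--Banach extension\<close>

lemma subspace_Union_chain:
  assumes "\<C> \<noteq> {}" and "\<And>S. S \<in> \<C> \<Longrightarrow> subspace S"
    and chain: "\<And>S T. S \<in> \<C> \<Longrightarrow> T \<in> \<C> \<Longrightarrow> S \<subseteq> T \<or> T \<subseteq> S"
  shows "subspace (\<Union>\<C>)"
  unfolding subspace_def
proof (intro conjI ballI allI)
  show "0 \<in> \<Union>\<C>" using assms(1,2) subspace_0 by blast
next
  fix x y assume "x \<in> \<Union>\<C>" "y \<in> \<Union>\<C>"
  then obtain S T where "x \<in> S" "y \<in> T" "S \<in> \<C>" "T \<in> \<C>" by blast
  with chain[of S T] assms(2) show "x + y \<in> \<Union>\<C>" by (meson UnionI subsetD subspace_add)
next
  fix a x assume "x \<in> \<Union>\<C>"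
  with assms(2) show "a *\<^sub>R x \<in> \<Union>\<C>" by (meson UnionE UnionI subspace_scale)
qed

text \<open>A partial linear functional is represented by its graph, a subspace of \<open>X \<times> \<real>\<close>;
  the bound by \<open>C \<parallel>x\<parallel>\<close> makes the graph single-valued.\<close>

definition dominated_graph :: "real \<Rightarrow> ('a::real_normed_vector \<times> real) set \<Rightarrow> bool" where
  "dominated_graph C H \<longleftrightarrow> subspace H \<and> (\<forall>(x, r)\<in>H. r \<le> C * norm x)"

lemma dominated_graph_add:
  "dominated_graph C H \<Longrightarrow> (x, r) \<in> H \<Longrightarrow> (y, s) \<in> H \<Longrightarrow> (x + y, r + s) \<in> H"
  unfolding dominated_graph_def using subspace_add by fastforce

lemma dominated_graph_scaleR:
  "dominated_graph C H \<Longrightarrow> (x, r) \<in> H \<Longrightarrow> (a *\<^sub>R x, a * r) \<in> H"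
  unfolding dominated_graph_def using subspace_scale by fastforce

lemma dominated_graph_single_valued:
  assumes H: "dominated_graph C H" and "(x, r) \<in> H" "(x, s) \<in> H"
  shows "r = s"
proof -
  have rs: "(0, r - s) \<in> H"
    using dominated_graph_add[OF H assms(2) dominated_graph_scaleR[OF H assms(3), of "-1"]] by simp
  moreover have "(0, s - r) \<in> H" using dominated_graph_scaleR[OF H rs, of "-1"] by simp
  ultimately have "r - s \<le> 0" "s - r \<le> 0"
    using H unfolding dominated_graph_def by fastforce+
  then show ?thesis by simp
qed

lemma dominated_graph_extension_nonneg:
  assumes H: "dominated_graph C H" and upper: "\<And>v w. (v, w) \<in> H \<Longrightarrow> c \<le> C * norm (v + x0) - w"
    and xr: "(x, r) \<in> H" and "t \<ge> 0"
  shows "r + t * c \<le> C * norm (x + t *\<^sub>R x0)"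
proof (cases "t = 0")
  case True
  then show ?thesis using H xr unfolding dominated_graph_def by auto
next
  case False
  with \<open>t \<ge> 0\<close> have "t > 0" by simp
  have "t * c \<le> t * (C * norm ((1 / t) *\<^sub>R x + x0) - (1 / t) * r)"
    using \<open>t > 0\<close> upper[OF dominated_graph_scaleR[OF H xr, of "1 / t"]] by (intro mult_left_mono) auto
  also have "\<dots> = C * (t * norm ((1 / t) *\<^sub>R x + x0)) - r"
    using \<open>t > 0\<close> by (simp add: algebra_simps)
  also have "t * norm ((1 / t) *\<^sub>R x + x0) = norm (t *\<^sub>R ((1 / t) *\<^sub>R x + x0))"
    using \<open>t > 0\<close> by simp
  also have "t *\<^sub>R ((1 / t) *\<^sub>R x + x0) = x + t *\<^sub>R x0"
    using \<open>t > 0\<close> by (simp add: algebra_simps)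
  finally show ?thesis by simp
qed

text \<open>The one-dimensional step of Hahn--Banach: a value \<open>c\<close> at the new direction \<open>x0\<close> exists
  because every lower constraint \<open>s - C \<parallel>u - x0\<parallel>\<close> lies below every upper constraint
  \<open>C \<parallel>v + x0\<parallel> - w\<close>. The lower constraints are the upper ones for \<open>(-x0, -c)\<close>.\<close>

lemma dominated_graph_extension_value:
  assumes H: "dominated_graph C H" and C: "C \<ge> 0"
  obtains c where "\<And>x r t. (x, r) \<in> H \<Longrightarrow> r + t * c \<le> C * norm (x + t *\<^sub>R x0)"
proof -
  have constraints: "s - C * norm (u - x0) \<le> C * norm (v + x0) - w"
    if "(u, s) \<in> H" "(v, w) \<in> H" for u s v w
  proof -
    have "s + w \<le> C * norm (u + v)"
      using H dominated_graph_add[OF H that] unfolding dominated_graph_def by blast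
    also have "\<dots> \<le> C * (norm (u - x0) + norm (v + x0))"
      using C norm_triangle_ineq[of "u - x0" "v + x0"] by (simp add: mult_left_mono)
    finally show ?thesis by (simp add: algebra_simps)
  qed
  define A where "A = {s - C * norm (u - x0) | u s. (u, s) \<in> H}"
  have H0: "(0, 0) \<in> H" using H subspace_0 unfolding dominated_graph_def by (metis zero_prod_def)
  have "A \<noteq> {}" using H0 unfolding A_def by blast
  moreover have "bdd_above A"
    using constraints[OF _ H0] unfolding A_def by (intro bdd_aboveI[where M = "C * norm x0"]) auto
  ultimately have "s - C * norm (u - x0) \<le> Sup A" if "(u, s) \<in> H" for u s
    using that unfolding A_def by (auto intro!: cSup_upper)
  then have lower: "- Sup A \<le> C * norm (u + - x0) - s" if "(u, s) \<in> H" for u s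
    using that by force
  have upper: "Sup A \<le> C * norm (v + x0) - w" if "(v, w) \<in> H" for v w
    using that constraints \<open>A \<noteq> {}\<close> unfolding A_def by (auto intro!: cSup_least)
  show thesis
  proof
    fix x r and t :: real assume xr: "(x, r) \<in> H"
    show "r + t * Sup A \<le> C * norm (x + t *\<^sub>R x0)"
    proof (cases "t \<ge> 0")
      case True
      show ?thesis by (rule dominated_graph_extension_nonneg[OF H upper xr True])
    next
      case False
      then have "r + (- t) * (- Sup A) \<le> C * norm (x + (- t) *\<^sub>R (- x0))"
        by (intro dominated_graph_extension_nonneg[OF H lower xr]) auto
      then show ?thesis by simp
    qed
  qed
qed

lemma dominated_graph_extend:
  assumes H: "dominated_graph C H" and C: "C \<ge> 0" and x0: "x0 \<notin> fst ` H"
  shows "\<exists>H'. dominated_graph C H' \<and> H \<subset> H'"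
proof -
  obtain c where c: "\<And>x r t. (x, r) \<in> H \<Longrightarrow> r + t * c \<le> C * norm (x + t *\<^sub>R x0)"
    using dominated_graph_extension_value[OF H C] by blast
  define H' where "H' = span (insert (x0, c) H)"
  have "r \<le> C * norm x" if xr: "(x, r) \<in> H'" for x r
  proof -
    obtain t where "(x, r) - t *\<^sub>R (x0, c) \<in> span H"
      using xr unfolding H'_def span_insert by blast
    moreover have "span H = H" using H unfolding dominated_graph_def by simp
    ultimately have "(x - t *\<^sub>R x0, r - t * c) \<in> H" by simp
    from c[OF this, of t] show ?thesis by simp
  qed
  then have "dominated_graph C H'" unfolding dominated_graph_def H'_def by auto
  moreover have "H \<subset> H'"
    using x0 span_superset[of "insert (x0, c) H"] unfolding H'_def by force
  ultimately show ?thesis by blast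
qed

lemma dominated_graph_total_extension:
  assumes G: "dominated_graph C G" and C: "C \<ge> 0"
  obtains H where "dominated_graph C H" "G \<subseteq> H" "fst ` H = UNIV"
proof -
  define \<A> where "\<A> = {H. dominated_graph C H \<and> G \<subseteq> H}"
  have "\<exists>M\<in>\<A>. \<forall>X\<in>\<A>. M \<subseteq> X \<longrightarrow> X = M"
  proof (rule subset_Zorn_nonempty)
    show "\<A> \<noteq> {}" using G unfolding \<A>_def by blast
  next
    fix \<C> assume ne: "\<C> \<noteq> {}" and "subset.chain \<A> \<C>"
    then have sub: "\<C> \<subseteq> \<A>" and chain: "\<And>S T. S \<in> \<C> \<Longrightarrow> T \<in> \<C> \<Longrightarrow> S \<subseteq> T \<or> T \<subseteq> S"
      unfolding subset.chain_def by auto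
    have "subspace (\<Union>\<C>)"
      using ne sub chain unfolding \<A>_def dominated_graph_def by (intro subspace_Union_chain) auto
    with ne sub show "\<Union>\<C> \<in> \<A>" unfolding \<A>_def dominated_graph_def by blast
  qed
  then obtain H where "H \<in> \<A>" and max: "\<And>X. X \<in> \<A> \<Longrightarrow> H \<subseteq> X \<Longrightarrow> X = H" by blast
  then have H: "dominated_graph C H" "G \<subseteq> H" unfolding \<A>_def by auto
  have "x \<in> fst ` H" for x
  proof (rule ccontr)
    assume "x \<notin> fst ` H"
    then obtain H' where "dominated_graph C H'" "H \<subset> H'"
      using dominated_graph_extend[OF H(1) C] by blast
    with max[of H'] H(2) show False unfolding \<A>_def by blast
  qed
  with H show thesis using that by blast
qed

lemma dominated_graph_blinfun:
  assumes H: "dominated_graph C H" and C: "C \<ge> 0" and total: "fst ` H = UNIV"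
  obtains F :: "'a::real_normed_vector \<Rightarrow>\<^sub>L real"
  where "norm F \<le> C" "\<And>x r. (x, r) \<in> H \<Longrightarrow> blinfun_apply F x = r"
proof -
  define f where "f x = (THE r. (x, r) \<in> H)" for x
  have f_eq: "f x = r" if "(x, r) \<in> H" for x r
    unfolding f_def using that dominated_graph_single_valued[OF H] by blast
  have fH: "(x, f x) \<in> H" for x
  proof -
    have "x \<in> fst ` H" using total by simp
    then obtain r where "(x, r) \<in> H" by force
    with f_eq show ?thesis by simp
  qed
  have bound: "\<bar>f x\<bar> \<le> C * norm x" for x
  proof -
    have "f x \<le> C * norm x" "f (-x) \<le> C * norm (-x)"
      using H fH unfolding dominated_graph_def by fast+
    moreover have "f (-x) = - f x"
      using f_eq[OF dominated_graph_scaleR[OF H fH[of x], of "-1"]] by simp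
    ultimately show ?thesis by simp
  qed
  have "bounded_linear f"
  proof (rule bounded_linear_intro[where K = C])
    show "f (x + y) = f x + f y" for x y using f_eq[OF dominated_graph_add[OF H fH fH]] .
    show "f (a *\<^sub>R x) = a *\<^sub>R f x" for a x using f_eq[OF dominated_graph_scaleR[OF H fH]] by simp
    show "norm (f x) \<le> norm x * C" for x using bound[of x] by (simp add: mult.commute)
  qed
  then have F: "blinfun_apply (Blinfun f) x = f x" for x by (simp add: bounded_linear_Blinfun_apply)
  show thesis
  proof (rule that)
    show "norm (Blinfun f) \<le> C" using bound by (intro norm_blinfun_bound[OF C]) (simp add: F)
    show "blinfun_apply (Blinfun f) x = r" if "(x, r) \<in> H" for x r
      using f_eq[OF that] F by simp
  qed
qed

lemma hahn_banach_dominated: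
  assumes "dominated_graph C G" and "C \<ge> 0"
  obtains F :: "'a::real_normed_vector \<Rightarrow>\<^sub>L real"
  where "norm F \<le> C" "\<And>x r. (x, r) \<in> G \<Longrightarrow> blinfun_apply F x = r"
proof -
  obtain H where H: "dominated_graph C H" "G \<subseteq> H" "fst ` H = UNIV"
    using dominated_graph_total_extension[OF assms] .
  obtain F :: "'a \<Rightarrow>\<^sub>L real" where "norm F \<le> C" "\<And>x r. (x, r) \<in> H \<Longrightarrow> blinfun_apply F x = r"
    using dominated_graph_blinfun[OF H(1) assms(2) H(3)] by blast
  with H(2) show thesis by (intro that) auto
qed

lemma blinfun_extension_through_point:
  fixes g :: "'a::real_normed_vector \<Rightarrow>\<^sub>L real"
  assumes E: "subspace E" and C: "C \<ge> 0"
    and dom: "\<And>e t. e \<in> E \<Longrightarrow> blinfun_apply g e + t * \<gamma> \<le> C * norm (e + t *\<^sub>R y)"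
  obtains F :: "'a \<Rightarrow>\<^sub>L real" where "norm F \<le> C"
    "\<And>e. e \<in> E \<Longrightarrow> blinfun_apply F e = blinfun_apply g e" "blinfun_apply F y = \<gamma>"
proof -
  define \<phi> where "\<phi> = (\<lambda>(e, t). (e + t *\<^sub>R y, blinfun_apply g e + t * \<gamma>))"
  have "linear \<phi>"
  proof (rule linearI)
    fix p q :: "'a \<times> real" and a :: real
    show "\<phi> (p + q) = \<phi> p + \<phi> q"
      by (cases p, cases q) (simp add: \<phi>_def blinfun.add_right algebra_simps)
    show "\<phi> (a *\<^sub>R p) = a *\<^sub>R \<phi> p"
      by (cases p) (simp add: \<phi>_def blinfun.scaleR_right algebra_simps)
  qed
  then have "subspace (\<phi> ` (E \<times> UNIV))"
    using E by (intro real_vector.linear_subspace_image real_vector.subspace_Times) auto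
  moreover have "r \<le> C * norm x" if xr: "(x, r) \<in> \<phi> ` (E \<times> UNIV)" for x r
  proof -
    obtain e t where "e \<in> E" "(x, r) = \<phi> (e, t)" using xr by auto
    with dom[of e t] show ?thesis by (simp add: \<phi>_def)
  qed
  ultimately have "dominated_graph C (\<phi> ` (E \<times> UNIV))" unfolding dominated_graph_def by blast
  then obtain F :: "'a \<Rightarrow>\<^sub>L real"
    where norm_F: "norm F \<le> C" and F: "\<And>x r. (x, r) \<in> \<phi> ` (E \<times> UNIV) \<Longrightarrow> blinfun_apply F x = r"
    using C by (rule hahn_banach_dominated) blast
  have "blinfun_apply F e = blinfun_apply g e" if "e \<in> E" for e
  proof (rule F)
    show "(e, blinfun_apply g e) \<in> \<phi> ` (E \<times> UNIV)"
    proof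
      show "(e, blinfun_apply g e) = \<phi> (e, 0)" by (simp add: \<phi>_def)
    qed (simp add: that)
  qed
  moreover have "blinfun_apply F y = \<gamma>"
  proof (rule F)
    show "(y, \<gamma>) \<in> \<phi> ` (E \<times> UNIV)"
    proof
      show "(y, \<gamma>) = \<phi> (0, 1)" by (simp add: \<phi>_def)
    qed (use E subspace_0 in simp)
  qed
  ultimately show thesis using that norm_F by blast
qed

lemma norming_functional:
  fixes x :: "'a::real_normed_vector"
  assumes "norm x = 1"
  obtains f :: "'a \<Rightarrow>\<^sub>L real" where "norm f \<le> 1" "blinfun_apply f x = 1"
proof (rule blinfun_extension_through_point[of "{0}" 1 0 1 x])
  show "blinfun_apply 0 e + t * 1 \<le> 1 * norm (e + t *\<^sub>R x)" if "e \<in> {0}" for e and t :: real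
    using that assms by simp
qed (auto intro: that)

lemma abs_blinfun_apply_le_norm:
  fixes f :: "'a::real_normed_vector \<Rightarrow>\<^sub>L real"
  assumes "norm f \<le> 1"
  shows "\<bar>blinfun_apply f x\<bar> \<le> norm x"
  using norm_blinfun[of f x] mult_right_mono[OF assms norm_ge_zero[of x]] by simp

lemma exists_unit_vector_blinfun_gt:
  fixes f :: "'a::real_normed_vector \<Rightarrow>\<^sub>L real"
  assumes "a < norm f" "0 \<le> a"
  obtains y where "norm y = 1" "a < blinfun_apply f y"
proof -
  have "norm (blinfun_apply f x) / norm x \<le> norm f" for x
    using norm_blinfun[of f x] by (cases "x = 0") (auto simp: divide_le_eq)
  then have "bdd_above (range (\<lambda>x. norm (blinfun_apply f x) / norm x))"
    by (intro bdd_aboveI2)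
  moreover have "norm f = (SUP x. norm (blinfun_apply f x) / norm x)"
    by (simp add: norm_blinfun.rep_eq onorm_def)
  ultimately obtain x where x: "a < \<bar>blinfun_apply f x\<bar> / norm x"
    using assms(1) less_cSUP_iff[of UNIV] by auto
  then have "x \<noteq> 0" using assms(2) by auto
  define y where "y = (1 / norm x) *\<^sub>R x"
  have "norm y = 1" using \<open>x \<noteq> 0\<close> unfolding y_def by simp
  have fy: "\<bar>blinfun_apply f y\<bar> = \<bar>blinfun_apply f x\<bar> / norm x"
    unfolding y_def by (simp add: blinfun.scaleR_right)
  show thesis
  proof (cases "a < blinfun_apply f y")
    case True
    with \<open>norm y = 1\<close> show thesis by (rule that)
  next
    case False
    with x fy have "a < blinfun_apply f (-y)" by (simp add: blinfun.minus_right)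
    moreover have "norm (-y) = 1" using \<open>norm y = 1\<close> by simp
    ultimately show thesis using that by blast
  qed
qed


section \<open>Compactness of finite-dimensional balls\<close>

lemma subspace_norm_add_scaleR_lower_bound:
  fixes b :: "'a::real_normed_vector"
  assumes S: "subspace S" and K: "compact (cball 0 (2 * norm b) \<inter> S)" and b: "b \<notin> S"
  obtains m where "m > 0" "\<And>x t. x \<in> S \<Longrightarrow> \<bar>t\<bar> * m \<le> norm (x + t *\<^sub>R b)"
proof -
  define K where "K = cball 0 (2 * norm b) \<inter> S"
  have "0 \<in> K" using S subspace_0 unfolding K_def by auto
  moreover have "closed K" using K unfolding K_def by (rule compact_imp_closed)
  moreover have "b \<notin> K" using b unfolding K_def by blast
  ultimately have d: "infdist b K > 0" by (intro infdist_pos_not_in_closed) auto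
  have "b \<noteq> 0" using S b subspace_0 by blast
  define m where "m = min (infdist b K) (norm b)"
  have "m > 0" using d \<open>b \<noteq> 0\<close> unfolding m_def by simp
  have dist_b: "m \<le> norm (b - x)" if x: "x \<in> S" for x
  proof (cases "norm x \<le> 2 * norm b")
    case True
    then have "infdist b K \<le> dist b x" using x unfolding K_def by (intro infdist_le) auto
    then show ?thesis unfolding m_def by (simp add: dist_norm)
  next
    case False
    then show ?thesis using norm_triangle_ineq3[of x b] unfolding m_def
      by (simp add: norm_minus_commute)
  qed
  have "\<bar>t\<bar> * m \<le> norm (x + t *\<^sub>R b)" if x: "x \<in> S" for x t
  proof (cases "t = 0")
    case False
    have "\<bar>t\<bar> * m \<le> \<bar>t\<bar> * norm (b - (- 1 / t) *\<^sub>R x)"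
      using dist_b[OF subspace_scale[OF S x, of "- 1 / t"]] by (simp add: mult_left_mono)
    also have "\<dots> = norm (t *\<^sub>R (b - (- 1 / t) *\<^sub>R x))" by simp
    also have "t *\<^sub>R (b - (- 1 / t) *\<^sub>R x) = x + t *\<^sub>R b"
      using False by (simp add: algebra_simps)
    finally show ?thesis .
  qed simp
  with \<open>m > 0\<close> show thesis by (rule that)
qed

lemma cball_Int_span_insert_subset:
  fixes b :: "'a::real_normed_vector"
  assumes "m > 0" and m: "\<And>x t. x \<in> span B \<Longrightarrow> \<bar>t\<bar> * m \<le> norm (x + t *\<^sub>R b)"
  shows "cball 0 r \<inter> span (insert b B) \<subseteq>
    (\<lambda>(x, t). x + t *\<^sub>R b) ` ((cball 0 (r + r / m * norm b) \<inter> span B) \<times> {- (r / m)..r / m})"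
proof
  fix z assume z: "z \<in> cball 0 r \<inter> span (insert b B)"
  then obtain t where x: "z - t *\<^sub>R b \<in> span B" unfolding span_insert by blast
  have "\<bar>t\<bar> * m \<le> r" using m[OF x, of t] z by simp
  then have t: "\<bar>t\<bar> \<le> r / m" using \<open>m > 0\<close> by (simp add: field_simps)
  have "norm (z - t *\<^sub>R b) \<le> norm z + \<bar>t\<bar> * norm b" using norm_triangle_ineq4[of z "t *\<^sub>R b"] by simp
  also have "\<dots> \<le> r + r / m * norm b"
    using z mult_right_mono[OF t norm_ge_zero[of b]] by (intro add_mono) auto
  finally have "(z - t *\<^sub>R b, t) \<in> (cball 0 (r + r / m * norm b) \<inter> span B) \<times> {- (r / m)..r / m}"
    using x t by auto
  then show "z \<in> (\<lambda>(x, t). x + t *\<^sub>R b) ` ((cball 0 (r + r / m * norm b) \<inter> span B) \<times> {- (r / m)..r / m})"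
    by (rule rev_image_eqI) simp
qed

lemma compact_cball_Int_span:
  fixes B :: "'a::real_normed_vector set"
  assumes "finite B"
  shows "compact (cball 0 r \<inter> span B)"
  using assms
proof (induction B arbitrary: r rule: finite_induct)
  case empty
  have "finite (cball 0 r \<inter> span ({} :: 'a set))" by (rule finite_subset[of _ "{0}"]) auto
  then show ?case by (rule finite_imp_compact)
next
  case (insert b B)
  show ?case
  proof (cases "b \<in> span B")
    case True
    then show ?thesis using insert.IH by (simp add: span_redundant)
  next
    case False
    obtain m where "m > 0" and m: "\<And>x t. x \<in> span B \<Longrightarrow> \<bar>t\<bar> * m \<le> norm (x + t *\<^sub>R b)"
      using subspace_norm_add_scaleR_lower_bound[OF subspace_span insert.IH False] by blast
    define K where "K = (\<lambda>(x, t). x + t *\<^sub>R b) ` ((cball 0 (r + r / m * norm b) \<inter> span B) \<times> {- (r / m)..r / m})"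
    have "continuous_on UNIV (\<lambda>(x, t). x + t *\<^sub>R b)"
      unfolding case_prod_unfold by (intro continuous_intros)
    then have "compact K"
      unfolding K_def by (intro compact_continuous_image compact_Times insert.IH compact_Icc)
        (auto intro: continuous_on_subset)
    moreover have "K \<subseteq> span (insert b B)"
      unfolding K_def by (auto intro!: span_add span_scale
          intro: span_base span_mono[THEN subsetD, of B "insert b B"])
    then have "cball 0 r \<inter> span (insert b B) = cball 0 r \<inter> K"
      using cball_Int_span_insert_subset[where r = r, OF \<open>m > 0\<close> m] unfolding K_def by blast
    ultimately show ?thesis by (metis closed_Int_compact closed_cball)
  qed
qed

lemma compact_sphere_Int_span:
  fixes B :: "'a::real_normed_vector set"
  assumes "finite B"
  shows "compact (sphere 0 1 \<inter> span B)"
proof -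
  have "closed (sphere (0::'a) 1)"
    unfolding sphere_def dist_norm by (intro closed_Collect_eq continuous_intros)
  moreover have "sphere 0 1 \<inter> span B = (cball 0 1 \<inter> span B) \<inter> sphere 0 1" by auto
  ultimately show ?thesis using compact_cball_Int_span[OF assms] compact_Int_closed by metis
qed


section \<open>Octahedrality tested on finite sets\<close>

lemma norm_scaleR_add_lower_bound:
  fixes x y :: "'a::real_normed_vector"
  assumes "norm x = 1" "norm y = 1" "norm (x + y) \<ge> 2 - \<delta>" "a \<ge> 0" "\<delta> \<ge> 0"
  shows "norm (a *\<^sub>R x + y) \<ge> (1 - \<delta>) * (a + 1)"
proof (cases "a \<ge> 1")
  case True
  have "a * norm (x + y) = norm (a *\<^sub>R (x + y))" using assms(4) by simp
  also have "\<dots> = norm ((a *\<^sub>R x + y) + (a - 1) *\<^sub>R y)" by (simp add: algebra_simps)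
  also have "\<dots> \<le> norm (a *\<^sub>R x + y) + (a - 1)"
    using norm_triangle_ineq[of "a *\<^sub>R x + y" "(a - 1) *\<^sub>R y"] True assms(2) by simp
  finally have "a * norm (x + y) \<le> norm (a *\<^sub>R x + y) + (a - 1)" .
  moreover have "a * (2 - \<delta>) \<le> a * norm (x + y)" using assms by (simp add: mult_left_mono)
  ultimately show ?thesis using assms True by (simp add: algebra_simps)
next
  case False
  have "norm (x + y) \<le> norm (a *\<^sub>R x + y) + norm ((1 - a) *\<^sub>R x)"
    using norm_triangle_ineq[of "a *\<^sub>R x + y" "(1 - a) *\<^sub>R x"] by (simp add: algebra_simps)
  also have "norm ((1 - a) *\<^sub>R x) = 1 - a" using False assms(1) by simp
  finally have "2 - \<delta> \<le> norm (a *\<^sub>R x + y) + (1 - a)" using assms(3) by linarith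
  moreover have "\<delta> * (a + 1) \<ge> \<delta>" using assms by (simp add: algebra_simps)
  ultimately show ?thesis by (simp add: algebra_simps)
qed

lemma norm_scaleR_add_lower_bound_perturbed:
  fixes x y u :: "'a::real_normed_vector"
  assumes "norm x = 1" "norm y = 1" "norm (x + y) \<ge> 2 - \<delta>" "a \<ge> 0" "\<delta> \<ge> 0"
    and "norm (u - x) \<le> \<delta>"
  shows "norm (a *\<^sub>R u + y) \<ge> (1 - 2 * \<delta>) * (a + 1)"
proof -
  have "norm (a *\<^sub>R x + y) \<le> norm (a *\<^sub>R u + y) + norm (a *\<^sub>R (u - x))"
    using norm_triangle_ineq4[of "a *\<^sub>R u + y" "a *\<^sub>R (u - x)"] by (simp add: algebra_simps)
  also have "norm (a *\<^sub>R (u - x)) \<le> a * \<delta>" using assms by (simp add: mult_left_mono)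
  finally show ?thesis
    using norm_scaleR_add_lower_bound[OF assms(1-5)] assms(4,5) by (simp add: algebra_simps)
qed

definition octahedral_finite :: "'a::real_normed_vector itself \<Rightarrow> bool" where
  "octahedral_finite _ \<longleftrightarrow> (\<forall>(F::'a set) \<delta>. finite F \<and> (\<forall>x\<in>F. norm x = 1) \<and> \<delta> > 0 \<longrightarrow>
      (\<exists>y::'a. norm y = 1 \<and> (\<forall>x\<in>F. norm (x + y) \<ge> 2 - \<delta>)))"

text \<open>A finite \<open>\<delta>\<close>-net of the unit sphere of \<open>E\<close> reduces octahedrality to finitely many
  unit vectors.\<close>

lemma finite_net_sphere_Int_span:
  fixes B :: "'a::real_normed_vector set"
  assumes "finite B" "\<delta> > 0"
  obtains N where "N \<subseteq> sphere 0 1 \<inter> span B" "finite N"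
    "\<And>u. u \<in> sphere 0 1 \<inter> span B \<Longrightarrow> \<exists>c\<in>N. dist c u < \<delta>"
proof -
  define S where "S = sphere (0::'a) 1 \<inter> span B"
  have "S \<subseteq> (\<Union>c\<in>S. ball c \<delta>)" using \<open>\<delta> > 0\<close> by (auto intro!: bexI)
  then obtain N where N: "N \<subseteq> S" "finite N" "S \<subseteq> (\<Union>c\<in>N. ball c \<delta>)"
    using compactE_image[OF compact_sphere_Int_span[OF assms(1)], of S "\<lambda>c. ball c \<delta>"]
    unfolding S_def by (metis open_ball)
  have "\<exists>c\<in>N. dist c u < \<delta>" if "u \<in> S" for u
    using N(3) that by (meson UN_E mem_ball subsetD)
  with N(1,2) that show thesis unfolding S_def by blast
qed

lemma octahedral_finite_imp_octahedral:
  assumes "octahedral_finite TYPE('a::real_normed_vector)"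
  shows "octahedral TYPE('a)"
  unfolding octahedral_def
proof (intro allI impI)
  fix E :: "'a set" and \<epsilon> :: real
  assume "fin_dim_subspace E \<and> \<epsilon> > 0"
  then obtain B where B: "finite B" "E = span B" and "\<epsilon> > 0" unfolding fin_dim_subspace_def by blast
  define \<delta> where "\<delta> = \<epsilon> / 2"
  have "\<delta> > 0" using \<open>\<epsilon> > 0\<close> unfolding \<delta>_def by simp
  obtain N where N: "N \<subseteq> sphere 0 1 \<inter> span B" "finite N"
    "\<And>u. u \<in> sphere 0 1 \<inter> span B \<Longrightarrow> \<exists>c\<in>N. dist c u < \<delta>"
    using finite_net_sphere_Int_span[OF B(1) \<open>\<delta> > 0\<close>] by blast
  have "\<forall>x\<in>N. norm x = 1" using N(1) by auto
  then obtain y where y: "norm y = 1" "\<And>c. c \<in> N \<Longrightarrow> norm (c + y) \<ge> 2 - \<delta>"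
    using assms \<open>\<delta> > 0\<close> N(2) unfolding octahedral_finite_def by meson
  have "norm (x + y) \<ge> (1 - \<epsilon>) * (norm x + norm y)" if x: "x \<in> E" for x
  proof (cases "x = 0")
    case True then show ?thesis using y \<open>\<epsilon> > 0\<close> by simp
  next
    case False
    define u where "u = (1 / norm x) *\<^sub>R x"
    have "u \<in> sphere 0 1 \<inter> span B" unfolding u_def using x B False by (auto intro: span_scale)
    then obtain c where c: "c \<in> N" "dist c u < \<delta>" using N(3) by blast
    have "norm c = 1" using c(1) N(1) by auto
    moreover have "norm (u - c) \<le> \<delta>" using c(2) by (simp add: dist_norm norm_minus_commute)
    ultimately have "(1 - 2 * \<delta>) * (norm x + 1) \<le> norm (norm x *\<^sub>R u + y)"
      using \<open>\<delta> > 0\<close>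
      by (intro norm_scaleR_add_lower_bound_perturbed[OF _ y(1) y(2)[OF c(1)]]) auto
    moreover have "norm x *\<^sub>R u = x" unfolding u_def using False by simp
    ultimately show ?thesis using y unfolding \<delta>_def by simp
  qed
  with y show "\<exists>y. norm y = 1 \<and> (\<forall>x\<in>E. norm (x + y) \<ge> (1 - \<epsilon>) * (norm x + norm y))"
    by blast
qed


section \<open>The weak* strong diameter 2 property implies octahedrality\<close>

lemma norm_convex_combination_le_one:
  fixes f :: "'i \<Rightarrow> 'a::real_normed_vector"
  assumes "\<And>i. i \<in> A \<Longrightarrow> lam i \<ge> 0" "sum lam A = 1" "\<And>i. i \<in> A \<Longrightarrow> norm (f i) \<le> 1"
  shows "norm (\<Sum>i\<in>A. lam i *\<^sub>R f i) \<le> 1"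
proof -
  have "norm (\<Sum>i\<in>A. lam i *\<^sub>R f i) \<le> (\<Sum>i\<in>A. norm (lam i *\<^sub>R f i))" by (rule norm_sum)
  also have "\<dots> \<le> (\<Sum>i\<in>A. lam i)"
    using assms(1,3) by (intro sum_mono) (simp add: mult_left_le)
  finally show ?thesis using assms(2) by simp
qed

lemma diameter_eq_2_iff:
  fixes D :: "'a::real_normed_vector set"
  assumes "D \<noteq> {}" and unit: "\<And>p. p \<in> D \<Longrightarrow> norm p \<le> 1"
  shows "diameter D = 2 \<longleftrightarrow> (\<forall>\<eta>>0. \<exists>p\<in>D. \<exists>q\<in>D. 2 - \<eta> < dist p q)"
proof -
  have le2: "dist p q \<le> 2" if "p \<in> D" "q \<in> D" for p q
    using unit[OF that(1)] unit[OF that(2)] norm_triangle_ineq4[of p q] by (simp add: dist_norm)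
  have bdd: "bdd_above ((\<lambda>(p, q). dist p q) ` (D \<times> D))"
    by (rule bdd_aboveI2[where M = 2]) (use le2 in auto)
  have diam: "diameter D = (SUP (p, q)\<in>D \<times> D. dist p q)"
    using assms(1) unfolding diameter_def by simp
  have "diameter D \<le> 2" unfolding diam using assms(1) le2 by (intro cSUP_least) auto
  moreover have sup_gt: "2 - \<eta> < diameter D \<longleftrightarrow> (\<exists>p\<in>D. \<exists>q\<in>D. 2 - \<eta> < dist p q)" for \<eta>
    unfolding diam using assms(1) by (subst less_cSUP_iff[OF _ bdd]) auto
  ultimately show ?thesis
  proof (intro iffI allI impI)
    fix \<eta> :: real assume "diameter D = 2" "\<eta> > 0"
    with sup_gt[of \<eta>] show "\<exists>p\<in>D. \<exists>q\<in>D. 2 - \<eta> < dist p q" by simp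
  next
    assume far: "\<forall>\<eta>>0. \<exists>p\<in>D. \<exists>q\<in>D. 2 - \<eta> < dist p q"
    have "2 \<le> diameter D"
    proof (rule field_le_epsilon)
      fix \<eta> :: real assume "\<eta> > 0"
      with far sup_gt[of \<eta>] show "2 \<le> diameter D + \<eta>" by simp
    qed
    with \<open>diameter D \<le> 2\<close> show "diameter D = 2" by simp
  qed
qed

lemma sum_upper_bound_imp_term_lower_bound:
  fixes d :: "'i \<Rightarrow> real" and M \<eta> :: real
  assumes "finite A" "j \<in> A" "\<And>i. i \<in> A \<Longrightarrow> d i \<le> M" "sum d A > card A * M - \<eta>"
  shows "d j > M - \<eta>"
proof -
  have "sum d (A - {j}) \<le> card (A - {j}) * M"
    using assms(3) sum_bounded_above[of "A - {j}" d M] by auto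
  moreover have "sum d A = d j + sum d (A - {j})" using assms(1,2) by (simp add: sum.remove)
  moreover have "card A * M = card (A - {j}) * M + M"
    by (simp add: card_Suc_Diff1[OF assms(1,2), symmetric] algebra_simps)
  ultimately show ?thesis using assms(4) by linarith
qed

lemma w_star_SD2P_separated_slice_functionals:
  fixes x :: "nat \<Rightarrow> 'a::real_normed_vector" and \<alpha> \<eta> :: real
  assumes W: "w_star_SD2P TYPE('a)" and n: "n \<ge> 1" and x: "\<And>i. i \<in> {1..n} \<Longrightarrow> norm (x i) = 1"
    and "\<alpha> > 0" "\<eta> > 0" "\<eta> \<le> 2"
  obtains y :: 'a and f g :: "nat \<Rightarrow> 'a \<Rightarrow>\<^sub>L real"
  where "norm y = 1" "\<And>i. i \<in> {1..n} \<Longrightarrow> f i \<in> weak_star_slice (x i) \<alpha>"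
    "\<And>i. i \<in> {1..n} \<Longrightarrow> g i \<in> weak_star_slice (x i) \<alpha>"
    "(\<Sum>i=1..n. blinfun_apply (f i) y - blinfun_apply (g i) y) > real n * (2 - \<eta>)"
proof -
  define D where "D = {\<Sum>i=1..n. (1 / n) *\<^sub>R f i | f.
    \<forall>i\<in>{1..n}. f i \<in> weak_star_slice (x i) \<alpha>}"
  have "diameter D = 2"
    using W n x \<open>\<alpha> > 0\<close> unfolding w_star_SD2P_def D_def by simp
  then have "D \<noteq> {}" unfolding diameter_def by auto
  moreover have "norm p \<le> 1" if "p \<in> D" for p
    using that n unfolding D_def weak_star_slice_def
    by (auto intro!: norm_convex_combination_le_one)
  ultimately obtain p q where "p \<in> D" "q \<in> D" "2 - \<eta> < dist p q"
    using diameter_eq_2_iff \<open>diameter D = 2\<close> \<open>\<eta> > 0\<close> by blast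
  then obtain f g where p: "p = (\<Sum>i=1..n. (1 / n) *\<^sub>R f i)" "\<forall>i\<in>{1..n}. f i \<in> weak_star_slice (x i) \<alpha>"
    and q: "q = (\<Sum>i=1..n. (1 / n) *\<^sub>R g i)" "\<forall>i\<in>{1..n}. g i \<in> weak_star_slice (x i) \<alpha>"
    unfolding D_def by blast
  obtain y where y: "norm y = 1" "2 - \<eta> < blinfun_apply (p - q) y"
    using exists_unit_vector_blinfun_gt[of "2 - \<eta>" "p - q"] \<open>2 - \<eta> < dist p q\<close> \<open>\<eta> \<le> 2\<close>
    by (auto simp: dist_norm)
  have "blinfun_apply (p - q) y = (\<Sum>i=1..n. blinfun_apply (f i) y - blinfun_apply (g i) y) / n"
    unfolding p q
    by (simp add: blinfun.diff_left blinfun.sum_left blinfun.scaleR_left sum_divide_distrib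
        sum_subtractf diff_divide_distrib)
  with y n have "(\<Sum>i=1..n. blinfun_apply (f i) y - blinfun_apply (g i) y) > real n * (2 - \<eta>)"
    by (simp add: less_divide_eq mult.commute)
  with y(1) p(2) q(2) show thesis by (intro that) auto
qed

lemma w_star_SD2P_imp_norm_add_near_2:
  fixes x :: "nat \<Rightarrow> 'a::real_normed_vector"
  assumes W: "w_star_SD2P TYPE('a)" and n: "n \<ge> 1" and x: "\<And>i. i \<in> {1..n} \<Longrightarrow> norm (x i) = 1"
    and "\<delta> > 0"
  obtains y where "norm y = 1" "\<And>i. i \<in> {1..n} \<Longrightarrow> norm (x i + y) \<ge> 2 - \<delta>"
proof -
  \<comment> \<open>Each of the \<open>n\<close> gaps is at most \<open>2\<close>, so an average gap above \<open>2 - \<eta>\<close> forces every gap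
    above \<open>2 - n \<eta>\<close>.\<close>
  define \<eta> where "\<eta> = min 1 (\<delta> / (2 * n))"
  have "\<eta> > 0" "\<eta> \<le> 2" using \<open>\<delta> > 0\<close> n unfolding \<eta>_def by auto
  have "n * \<eta> \<le> \<delta> / 2" using n unfolding \<eta>_def by (simp add: min_def field_simps)
  have "\<delta> / 2 > 0" using \<open>\<delta> > 0\<close> by simp
  obtain y :: 'a and f g :: "nat \<Rightarrow> 'a \<Rightarrow>\<^sub>L real" where y: "norm y = 1"
    and f: "\<And>i. i \<in> {1..n} \<Longrightarrow> f i \<in> weak_star_slice (x i) (\<delta> / 2)"
    and g: "\<And>i. i \<in> {1..n} \<Longrightarrow> g i \<in> weak_star_slice (x i) (\<delta> / 2)"
    and sum: "(\<Sum>i=1..n. blinfun_apply (f i) y - blinfun_apply (g i) y) > real n * (2 - \<eta>)"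
    using w_star_SD2P_separated_slice_functionals[where x = x, OF W n x
        \<open>\<delta> / 2 > 0\<close> \<open>\<eta> > 0\<close> \<open>\<eta> \<le> 2\<close>]
    by blast
  have bounded: "\<bar>blinfun_apply (f i) y\<bar> \<le> 1" "\<bar>blinfun_apply (g i) y\<bar> \<le> 1" if "i \<in> {1..n}" for i
    using abs_blinfun_apply_le_norm[of "f i" y] abs_blinfun_apply_le_norm[of "g i" y]
      f[OF that] g[OF that] y unfolding weak_star_slice_def by auto
  define d where "d i = blinfun_apply (f i) y - blinfun_apply (g i) y" for i
  have d_le: "d i \<le> 2" if "i \<in> {1..n}" for i
    using bounded[OF that] unfolding d_def by (simp add: abs_le_iff)
  have "sum d {1..n} > card {1..n} * 2 - n * \<eta>"
    using sum unfolding d_def by (simp add: algebra_simps)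
  then have d_gt: "d j > 2 - n * \<eta>" if "j \<in> {1..n}" for j
    using sum_upper_bound_imp_term_lower_bound[OF _ that d_le] by simp
  have "norm (x j + y) \<ge> 2 - \<delta>" if j: "j \<in> {1..n}" for j
  proof -
    have "blinfun_apply (f j) y > 1 - \<delta> / 2"
      using d_gt[OF j] bounded[OF j] \<open>n * \<eta> \<le> \<delta> / 2\<close> unfolding d_def by linarith
    moreover have "blinfun_apply (f j) (x j) > 1 - \<delta> / 2" "norm (f j) \<le> 1"
      using f[OF j] unfolding weak_star_slice_def by auto
    moreover have "blinfun_apply (f j) (x j + y) \<le> norm (x j + y)"
      using abs_blinfun_apply_le_norm[OF \<open>norm (f j) \<le> 1\<close>, of "x j + y"] by linarith
    ultimately show ?thesis by (simp add: blinfun.add_right)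
  qed
  with y show thesis by (rule that)
qed

lemma w_star_SD2P_imp_octahedral_finite:
  assumes nontrivial: "\<exists>x::'a::real_normed_vector. x \<noteq> 0" and W: "w_star_SD2P TYPE('a)"
  shows "octahedral_finite TYPE('a)"
  unfolding octahedral_finite_def
proof (intro allI impI)
  fix F :: "'a set" and \<delta> :: real
  assume F: "finite F \<and> (\<forall>x\<in>F. norm x = 1) \<and> \<delta> > 0"
  obtain z0 :: 'a where "z0 \<noteq> 0" using nontrivial by blast
  then have "norm (sgn z0) = 1" by (simp add: norm_sgn)
  \<comment> \<open>Padding \<open>F\<close> with a unit vector makes the number \<open>n\<close> of slices positive.\<close>
  define n where "n = card (insert (sgn z0) F)"
  obtain h where h: "bij_betw h {1..n} (insert (sgn z0) F)"
    using ex_bij_betw_nat_finite_1 F unfolding n_def by blast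
  have "n \<ge> 1" using F unfolding n_def by (simp add: card_gt_0_iff Suc_le_eq)
  have "norm (h i) = 1" if "i \<in> {1..n}" for i
  proof -
    have "h i \<in> insert (sgn z0) F" using bij_betwE[OF h] that by blast
    then show ?thesis using F \<open>norm (sgn z0) = 1\<close> by auto
  qed
  then obtain y where y: "norm y = 1" "\<And>i. i \<in> {1..n} \<Longrightarrow> norm (h i + y) \<ge> 2 - \<delta>"
    using w_star_SD2P_imp_norm_add_near_2[OF W \<open>n \<ge> 1\<close>] F by blast
  have "norm (x + y) \<ge> 2 - \<delta>" if "x \<in> F" for x
  proof -
    have "x \<in> h ` {1..n}" using bij_betw_imp_surj_on[OF h] \<open>x \<in> F\<close> by blast
    with y(2) show ?thesis by blast
  qed
  with y(1) show "\<exists>y. norm y = 1 \<and> (\<forall>x\<in>F. norm (x + y) \<ge> 2 - \<delta>)" by blast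
qed


section \<open>Octahedrality implies (iii) and (iii')\<close>

lemma octahedral_norm_add_scaleR_lower_bound:
  fixes y :: "'a::real_normed_vector"
  assumes E: "subspace E" and y: "norm y = 1"
    and oct: "\<And>x. x \<in> E \<Longrightarrow> norm (x + y) \<ge> (1 - \<delta>) * (norm x + norm y)"
    and "0 \<le> \<delta>" "\<delta> \<le> 1" and e: "e \<in> E"
  shows "norm (e + t *\<^sub>R y) \<ge> (1 - \<delta>) * (norm e + \<bar>t\<bar>)"
proof -
  have pos: "(1 - \<delta>) * (norm e + c) \<le> norm (e + c *\<^sub>R y)" if "e \<in> E" "c > 0" for e c
  proof -
    have "(1 - \<delta>) * (norm e + c) = c * ((1 - \<delta>) * (norm ((1 / c) *\<^sub>R e) + norm y))"
      using \<open>c > 0\<close> y by (simp add: field_simps)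
    also have "\<dots> \<le> c * norm ((1 / c) *\<^sub>R e + y)"
      using oct[OF subspace_scale[OF E \<open>e \<in> E\<close>, of "1 / c"]] \<open>c > 0\<close>
      by (intro mult_left_mono) auto
    also have "\<dots> = norm (c *\<^sub>R ((1 / c) *\<^sub>R e + y))" using \<open>c > 0\<close> by simp
    also have "c *\<^sub>R ((1 / c) *\<^sub>R e + y) = e + c *\<^sub>R y" using \<open>c > 0\<close> by (simp add: scaleR_add_right)
    finally show ?thesis .
  qed
  consider "t = 0" | "t > 0" | "t < 0" by linarith
  then show ?thesis
  proof cases
    case 1 then show ?thesis
      using mult_nonneg_nonneg[OF \<open>0 \<le> \<delta>\<close> norm_ge_zero[of e]] by (simp add: algebra_simps)
  next
    case 2 then show ?thesis using pos[OF e] by simp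
  next
    case 3
    have "(1 - \<delta>) * (norm (-e) + (-t)) \<le> norm (-e + (-t) *\<^sub>R y)"
      using pos[OF subspace_neg[OF E e], of "-t"] 3 by simp
    also have "norm (-e + (-t) *\<^sub>R y) = norm (e + t *\<^sub>R y)"
      by (metis minus_add_distrib norm_minus_cancel scaleR_minus_left)
    finally show ?thesis using 3 by simp
  qed
qed

lemma octahedral_blinfun_extension:
  fixes y :: "'a::real_normed_vector" and g :: "'a \<Rightarrow>\<^sub>L real"
  assumes E: "subspace E" and y: "norm y = 1"
    and oct: "\<And>x. x \<in> E \<Longrightarrow> norm (x + y) \<ge> (1 - \<delta>) * (norm x + norm y)"
    and "0 \<le> \<delta>" "\<delta> < 1" and g: "norm g \<le> 1" and C: "1 \<le> C * (1 - \<delta>)" "\<bar>\<gamma>\<bar> \<le> C * (1 - \<delta>)"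
  obtains F :: "'a \<Rightarrow>\<^sub>L real" where "norm F \<le> C"
    "\<And>e. e \<in> E \<Longrightarrow> blinfun_apply F e = blinfun_apply g e" "blinfun_apply F y = \<gamma>"
proof (rule blinfun_extension_through_point[OF E])
  have "0 < C * (1 - \<delta>)" using C(1) by linarith
  then show "C \<ge> 0" using \<open>\<delta> < 1\<close> by (simp add: zero_less_mult_iff)
  show "blinfun_apply g e + t * \<gamma> \<le> C * norm (e + t *\<^sub>R y)" if "e \<in> E" for e t
  proof -
    have "blinfun_apply g e \<le> C * (1 - \<delta>) * norm e"
      using abs_blinfun_apply_le_norm[OF g, of e] mult_right_mono[OF C(1) norm_ge_zero[of e]]
      by linarith
    moreover have "t * \<gamma> \<le> \<bar>t\<bar> * \<bar>\<gamma>\<bar>" by (metis abs_ge_self abs_mult)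
    moreover have "\<bar>t\<bar> * \<bar>\<gamma>\<bar> \<le> \<bar>t\<bar> * (C * (1 - \<delta>))" using C(2) by (simp add: mult_left_mono)
    moreover have "C * ((1 - \<delta>) * (norm e + \<bar>t\<bar>)) \<le> C * norm (e + t *\<^sub>R y)"
      using octahedral_norm_add_scaleR_lower_bound[OF E y oct \<open>0 \<le> \<delta>\<close> _ that] \<open>\<delta> < 1\<close> \<open>C \<ge> 0\<close>
      by (intro mult_left_mono) auto
    ultimately show ?thesis by (simp add: algebra_simps)
  qed
qed (rule that)

lemma octahedral_imp_prop_iii:
  assumes oct: "octahedral TYPE('a::real_normed_vector)"
  shows "prop_iii TYPE('a)"
  unfolding prop_iii_def
proof (intro allI impI)
  fix E :: "'a set" and n :: nat and xs :: "nat \<Rightarrow> ('a \<Rightarrow>\<^sub>L real)" and \<epsilon> \<epsilon>0 :: real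
  assume H: "fin_dim_subspace E \<and> n \<ge> 1 \<and> (\<forall>i\<in>{1..n}. norm (xs i) \<le> 1) \<and>
    \<epsilon> > 0 \<and> 0 < \<epsilon>0 \<and> \<epsilon>0 < \<epsilon>"
  then have E: "subspace E" unfolding fin_dim_subspace_def by auto
  \<comment> \<open>Choosing \<open>(1 + \<epsilon>) (1 - \<delta>) = 1 + \<epsilon>0\<close> leaves exactly the room the prescribed values need.\<close>
  define \<delta> where "\<delta> = (\<epsilon> - \<epsilon>0) / (1 + \<epsilon>)"
  have \<delta>: "0 < \<delta>" "\<delta> < 1" "(1 + \<epsilon>) * (1 - \<delta>) = 1 + \<epsilon>0"
    using H unfolding \<delta>_def by (auto simp: divide_less_eq field_simps)
  obtain y where y: "norm y = 1" "\<And>x. x \<in> E \<Longrightarrow> norm (x + y) \<ge> (1 - \<delta>) * (norm x + norm y)"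
    using oct H \<delta>(1) unfolding octahedral_def by blast
  show "\<exists>y. norm y = 1 \<and>
           (\<forall>\<gamma>::nat \<Rightarrow> real. (\<forall>i\<in>{1..n}. \<bar>\<gamma> i\<bar> \<le> 1 + \<epsilon>0) \<longrightarrow>
              (\<exists>ys::nat \<Rightarrow> ('a \<Rightarrow>\<^sub>L real). \<forall>i\<in>{1..n}.
                  (\<forall>e\<in>E. blinfun_apply (ys i) e = blinfun_apply (xs i) e) \<and>
                  blinfun_apply (ys i) y = \<gamma> i \<and> norm (ys i) \<le> 1 + \<epsilon>))"
  proof (intro exI[of _ y] conjI allI impI)
    fix \<gamma> :: "nat \<Rightarrow> real" assume \<gamma>: "\<forall>i\<in>{1..n}. \<bar>\<gamma> i\<bar> \<le> 1 + \<epsilon>0"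
    have "\<exists>F. (\<forall>e\<in>E. blinfun_apply F e = blinfun_apply (xs i) e) \<and>
        blinfun_apply F y = \<gamma> i \<and> norm F \<le> 1 + \<epsilon>" if i: "i \<in> {1..n}" for i
    proof (rule octahedral_blinfun_extension[OF E y])
      show "norm (xs i) \<le> 1" "1 \<le> (1 + \<epsilon>) * (1 - \<delta>)" "\<bar>\<gamma> i\<bar> \<le> (1 + \<epsilon>) * (1 - \<delta>)"
        using H \<gamma> i \<delta>(3) by auto
    qed (use \<delta> in auto)
    then show "\<exists>ys::nat \<Rightarrow> ('a \<Rightarrow>\<^sub>L real). \<forall>i\<in>{1..n}.
        (\<forall>e\<in>E. blinfun_apply (ys i) e = blinfun_apply (xs i) e) \<and>
        blinfun_apply (ys i) y = \<gamma> i \<and> norm (ys i) \<le> 1 + \<epsilon>"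
      by (intro bchoice ballI)
  qed (rule y(1))
qed

lemma prop_iii_imp_prop_iii':
  assumes P: "prop_iii TYPE('a::real_normed_vector)"
  shows "prop_iii' TYPE('a)"
  unfolding prop_iii'_def
proof (intro allI impI)
  fix E :: "'a set" and n :: nat and xs :: "nat \<Rightarrow> ('a \<Rightarrow>\<^sub>L real)" and \<epsilon> :: real
  assume H: "fin_dim_subspace E \<and> n \<ge> 1 \<and> (\<forall>i\<in>{1..n}. norm (xs i) \<le> 1) \<and> \<epsilon> > 0"
  obtain y where y: "norm y = 1" and Y: "\<forall>\<gamma>::nat \<Rightarrow> real. (\<forall>i\<in>{1..n}. \<bar>\<gamma> i\<bar> \<le> 1 + \<epsilon>/2) \<longrightarrow>
      (\<exists>ys::nat \<Rightarrow> ('a \<Rightarrow>\<^sub>L real). \<forall>i\<in>{1..n}.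
        (\<forall>e\<in>E. blinfun_apply (ys i) e = blinfun_apply (xs i) e) \<and>
        blinfun_apply (ys i) y = \<gamma> i \<and> norm (ys i) \<le> 1 + \<epsilon>)"
    using P[unfolded prop_iii_def, rule_format, of E n xs \<epsilon> "\<epsilon>/2"] H by auto
  obtain x1 where x1: "\<forall>i\<in>{1..n}. (\<forall>e\<in>E. blinfun_apply (x1 i) e = blinfun_apply (xs i) e) \<and>
      blinfun_apply (x1 i) y = 1 + \<epsilon>/2 \<and> norm (x1 i) \<le> 1 + \<epsilon>"
    using Y[rule_format, of "\<lambda>i. 1 + \<epsilon>/2"] H by auto
  obtain x2 where x2: "\<forall>i\<in>{1..n}. (\<forall>e\<in>E. blinfun_apply (x2 i) e = blinfun_apply (xs i) e) \<and>
      blinfun_apply (x2 i) y = -(1 + \<epsilon>/2) \<and> norm (x2 i) \<le> 1 + \<epsilon>"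
    using Y[rule_format, of "\<lambda>i. -(1 + \<epsilon>/2)"] H by auto
  show "\<exists>y x1 x2. norm y = 1 \<and>
      (\<forall>i\<in>{1..n}.
        (\<forall>e\<in>E. blinfun_apply (x1 i) e = blinfun_apply (xs i) e) \<and>
        (\<forall>e\<in>E. blinfun_apply (x2 i) e = blinfun_apply (xs i) e) \<and>
        blinfun_apply (x1 i) y - blinfun_apply (x2 i) y > 2 - \<epsilon> \<and>
        norm (x1 i) \<le> 1 + \<epsilon> \<and> norm (x2 i) \<le> 1 + \<epsilon>)"
    using y x1 x2 H by (intro exI[of _ y] exI[of _ x1] exI[of _ x2]) auto
qed


section \<open>(iii') implies the weak* strong diameter 2 property\<close>

lemma scaleR_in_weak_star_slice:
  fixes f :: "'a::real_normed_vector \<Rightarrow>\<^sub>L real"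
  assumes "norm f \<le> 1 + \<epsilon>" "blinfun_apply f x = 1" "0 < \<epsilon>" "\<epsilon> < \<alpha>"
  shows "(1 / (1 + \<epsilon>)) *\<^sub>R f \<in> weak_star_slice x \<alpha>"
proof -
  have "norm ((1 / (1 + \<epsilon>)) *\<^sub>R f) \<le> 1" using assms(1,3) by (simp add: field_simps)
  moreover have "1 - \<epsilon> \<le> 1 / (1 + \<epsilon>)"
    using assms(3) by (simp add: field_simps)
  ultimately show ?thesis
    using assms(2,4) unfolding weak_star_slice_def by (simp add: blinfun.scaleR_left)
qed

lemma exists_pos_below_all:
  fixes \<alpha> :: "'i \<Rightarrow> real"
  assumes "finite A" "\<And>i. i \<in> A \<Longrightarrow> \<alpha> i > 0" "\<eta> > 0"
  obtains \<epsilon> where "\<epsilon> > 0" "\<epsilon> \<le> \<eta>" "\<And>i. i \<in> A \<Longrightarrow> \<epsilon> < \<alpha> i"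
proof
  define m where "m = Min (insert \<eta> (\<alpha> ` A))"
  have "m > 0" using assms unfolding m_def by (subst Min_gr_iff) auto
  then show "m / 2 > 0" by simp
  have "m \<le> \<eta>" unfolding m_def using assms(1) by (intro Min_le) auto
  then show "m / 2 \<le> \<eta>" using \<open>m > 0\<close> by simp
  show "m / 2 < \<alpha> i" if "i \<in> A" for i
  proof -
    have "m \<le> \<alpha> i" unfolding m_def using assms(1) that by (intro Min_le) auto
    then show ?thesis using \<open>m > 0\<close> by simp
  qed
qed

lemma norming_functional_family:
  fixes x :: "'i \<Rightarrow> 'a::real_normed_vector"
  assumes "\<And>i. i \<in> I \<Longrightarrow> norm (x i) = 1"
  obtains fs :: "'i \<Rightarrow> 'a \<Rightarrow>\<^sub>L real"
  where "\<forall>i\<in>I. norm (fs i) \<le> 1 \<and> blinfun_apply (fs i) (x i) = 1"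
proof -
  have "\<exists>f::'a \<Rightarrow>\<^sub>L real. norm f \<le> 1 \<and> blinfun_apply f (x i) = 1" if "i \<in> I" for i
    by (rule norming_functional[OF assms[OF that]]) blast
  then have "\<forall>i\<in>I. \<exists>f::'a \<Rightarrow>\<^sub>L real. norm f \<le> 1 \<and> blinfun_apply f (x i) = 1" by blast
  from bchoice[OF this] show thesis using that by blast
qed

lemma dist_convex_combinations_lower_bound:
  fixes f g :: "'i \<Rightarrow> 'a::real_normed_vector \<Rightarrow>\<^sub>L real"
  assumes lam: "\<And>i. i \<in> A \<Longrightarrow> lam i \<ge> 0" "sum lam A = 1" and "norm y = 1"
    and gap: "\<And>i. i \<in> A \<Longrightarrow> b \<le> blinfun_apply (f i) y - blinfun_apply (g i) y"
  shows "b \<le> dist (\<Sum>i\<in>A. lam i *\<^sub>R f i) (\<Sum>i\<in>A. lam i *\<^sub>R g i)"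
proof -
  have "b = (\<Sum>i\<in>A. lam i * b)" using lam(2) by (simp add: sum_distrib_right[symmetric])
  also have "\<dots> \<le> (\<Sum>i\<in>A. lam i * (blinfun_apply (f i) y - blinfun_apply (g i) y))"
    using lam(1) gap by (intro sum_mono mult_left_mono) auto
  also have "\<dots> = blinfun_apply ((\<Sum>i\<in>A. lam i *\<^sub>R f i) - (\<Sum>i\<in>A. lam i *\<^sub>R g i)) y"
    by (simp add: blinfun.diff_left blinfun.sum_left blinfun.scaleR_left sum_subtractf[symmetric]
        algebra_simps)
  also have "\<dots> \<le> dist (\<Sum>i\<in>A. lam i *\<^sub>R f i) (\<Sum>i\<in>A. lam i *\<^sub>R g i)"
    using norm_blinfun[of "(\<Sum>i\<in>A. lam i *\<^sub>R f i) - (\<Sum>i\<in>A. lam i *\<^sub>R g i)" y] \<open>norm y = 1\<close>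
    by (simp add: dist_norm)
  finally show ?thesis .
qed

lemma two_minus_lt_div_one_plus:
  fixes \<epsilon> \<eta> :: real
  assumes "0 < \<epsilon>" "0 < \<eta>" "3 * \<epsilon> \<le> \<eta>"
  shows "2 - \<eta> < (2 - \<epsilon>) / (1 + \<epsilon>)"
proof -
  have "(2 - \<eta>) * (1 + \<epsilon>) = 2 - \<epsilon> - (\<eta> - 3 * \<epsilon>) - \<eta> * \<epsilon>" by (simp add: algebra_simps)
  also have "\<dots> < 2 - \<epsilon>" using assms(3) mult_pos_pos[OF assms(2,1)] by linarith
  finally show ?thesis using assms(1) by (simp add: field_simps)
qed

lemma prop_iii'_imp_far_slice_combinations:
  fixes x :: "nat \<Rightarrow> 'a::real_normed_vector"
  assumes P: "prop_iii' TYPE('a)" and n: "n \<ge> 1"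
    and lam: "\<And>i. i \<in> {1..n} \<Longrightarrow> lam i \<ge> 0" "(\<Sum>i=1..n. lam i) = 1"
    and x: "\<And>i. i \<in> {1..n} \<Longrightarrow> norm (x i) = 1" and \<alpha>: "\<And>i. i \<in> {1..n} \<Longrightarrow> \<alpha> i > 0"
    and "\<eta> > 0"
  obtains f g where "\<And>i. i \<in> {1..n} \<Longrightarrow> f i \<in> weak_star_slice (x i) (\<alpha> i)"
    "\<And>i. i \<in> {1..n} \<Longrightarrow> g i \<in> weak_star_slice (x i) (\<alpha> i)"
    "2 - \<eta> < dist (\<Sum>i=1..n. lam i *\<^sub>R f i) (\<Sum>i=1..n. lam i *\<^sub>R g i)"
proof -
  obtain \<epsilon> where \<epsilon>: "\<epsilon> > 0" "\<epsilon> \<le> \<eta> / 3" "\<And>i. i \<in> {1..n} \<Longrightarrow> \<epsilon> < \<alpha> i"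
    using exists_pos_below_all[of "{1..n}" \<alpha> "\<eta> / 3"] \<alpha> \<open>\<eta> > 0\<close> by auto
  obtain fs :: "nat \<Rightarrow> 'a \<Rightarrow>\<^sub>L real"
    where fs: "\<forall>i\<in>{1..n}. norm (fs i) \<le> 1 \<and> blinfun_apply (fs i) (x i) = 1"
    using norming_functional_family[where x = x and I = "{1..n}"] x by blast
  define E where "E = span (x ` {1..n})"
  have "fin_dim_subspace E" unfolding E_def fin_dim_subspace_def by blast
  then obtain y x1 x2 where y: "norm y = 1" and X: "\<forall>i\<in>{1..n}.
      (\<forall>e\<in>E. blinfun_apply (x1 i) e = blinfun_apply (fs i) e) \<and>
      (\<forall>e\<in>E. blinfun_apply (x2 i) e = blinfun_apply (fs i) e) \<and>
      blinfun_apply (x1 i) y - blinfun_apply (x2 i) y > 2 - \<epsilon> \<and>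
      norm (x1 i) \<le> 1 + \<epsilon> \<and> norm (x2 i) \<le> 1 + \<epsilon>"
    using P[unfolded prop_iii'_def, rule_format, of E n fs \<epsilon>] n fs \<epsilon>(1) by blast
  have "x i \<in> E" if "i \<in> {1..n}" for i unfolding E_def using that by (simp add: span_base)
  then have at_x: "blinfun_apply (x1 i) (x i) = 1 \<and> blinfun_apply (x2 i) (x i) = 1" if "i \<in> {1..n}" for i
    using X fs that by auto
  define c where "c = 1 / (1 + \<epsilon>)"
  have slices: "c *\<^sub>R x1 i \<in> weak_star_slice (x i) (\<alpha> i) \<and> c *\<^sub>R x2 i \<in> weak_star_slice (x i) (\<alpha> i)"
    if "i \<in> {1..n}" for i
    unfolding c_def using X \<epsilon>(1,3) at_x[OF that] that
    by (auto intro!: scaleR_in_weak_star_slice)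
  have "2 - \<eta> < c * (2 - \<epsilon>)"
    using two_minus_lt_div_one_plus[OF \<epsilon>(1) \<open>\<eta> > 0\<close>] \<epsilon>(2) unfolding c_def by simp
  also have "\<dots> \<le> dist (\<Sum>i=1..n. lam i *\<^sub>R (c *\<^sub>R x1 i)) (\<Sum>i=1..n. lam i *\<^sub>R (c *\<^sub>R x2 i))"
  proof (rule dist_convex_combinations_lower_bound[OF lam y])
    fix i assume "i \<in> {1..n}"
    then have "2 - \<epsilon> \<le> blinfun_apply (x1 i) y - blinfun_apply (x2 i) y" using X less_imp_le by blast
    then have "c * (2 - \<epsilon>) \<le> c * (blinfun_apply (x1 i) y - blinfun_apply (x2 i) y)"
      using \<epsilon>(1) unfolding c_def by (intro mult_left_mono) auto
    then show "c * (2 - \<epsilon>) \<le> blinfun_apply (c *\<^sub>R x1 i) y - blinfun_apply (c *\<^sub>R x2 i) y"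
      by (simp add: blinfun.scaleR_left right_diff_distrib)
  qed
  finally have "2 - \<eta> < dist (\<Sum>i=1..n. lam i *\<^sub>R (c *\<^sub>R x1 i)) (\<Sum>i=1..n. lam i *\<^sub>R (c *\<^sub>R x2 i))" .
  then show thesis
    by (rule that[of "\<lambda>i. c *\<^sub>R x1 i" "\<lambda>i. c *\<^sub>R x2 i", rotated 2]) (use slices in auto)
qed

lemma prop_iii'_imp_w_star_SD2P:
  assumes P: "prop_iii' TYPE('a::real_normed_vector)"
  shows "w_star_SD2P TYPE('a)"
  unfolding w_star_SD2P_def
proof (intro allI impI)
  fix n :: nat and lam :: "nat \<Rightarrow> real" and x :: "nat \<Rightarrow> 'a" and \<alpha> :: "nat \<Rightarrow> real"
  assume H: "n \<ge> 1 \<and> (\<forall>i\<in>{1..n}. lam i \<ge> 0) \<and> (\<Sum>i=1..n. lam i) = 1 \<and>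
    (\<forall>i\<in>{1..n}. norm (x i) = 1 \<and> \<alpha> i > 0)"
  define D where "D = {\<Sum>i=1..n. lam i *\<^sub>R f i | f. \<forall>i\<in>{1..n}. f i \<in> weak_star_slice (x i) (\<alpha> i)}"
  have far: "\<exists>p\<in>D. \<exists>q\<in>D. 2 - \<eta> < dist p q" if "\<eta> > 0" for \<eta>
  proof -
    obtain f g where "\<And>i. i \<in> {1..n} \<Longrightarrow> f i \<in> weak_star_slice (x i) (\<alpha> i)"
      "\<And>i. i \<in> {1..n} \<Longrightarrow> g i \<in> weak_star_slice (x i) (\<alpha> i)"
      "2 - \<eta> < dist (\<Sum>i=1..n. lam i *\<^sub>R f i) (\<Sum>i=1..n. lam i *\<^sub>R g i)"
      using prop_iii'_imp_far_slice_combinations[OF P, of n lam x \<alpha> \<eta>] H \<open>\<eta> > 0\<close> by blast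
    then show ?thesis unfolding D_def by blast
  qed
  then have "D \<noteq> {}" using zero_less_one by blast
  moreover have "norm p \<le> 1" if "p \<in> D" for p
    using that H unfolding D_def weak_star_slice_def
    by (auto intro!: norm_convex_combination_le_one)
  ultimately show "diameter {\<Sum>i=1..n. lam i *\<^sub>R f i | f.
      \<forall>i\<in>{1..n}. f i \<in> weak_star_slice (x i) (\<alpha> i)} = 2"
    using far unfolding D_def[symmetric] by (simp add: diameter_eq_2_iff)
qed

theorem theorem3p5:
  assumes "\<exists>x::'a::banach. x \<noteq> 0"
  shows "(w_star_SD2P TYPE('a) \<longleftrightarrow> octahedral TYPE('a)) \<and>
         (octahedral TYPE('a) \<longleftrightarrow> prop_iii TYPE('a)) \<and>
         (octahedral TYPE('a) \<longleftrightarrow> prop_iii' TYPE('a))"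
proof -
  have "octahedral TYPE('a) \<Longrightarrow> prop_iii TYPE('a)" by (rule octahedral_imp_prop_iii)
  moreover have "prop_iii TYPE('a) \<Longrightarrow> prop_iii' TYPE('a)" by (rule prop_iii_imp_prop_iii')
  moreover have "prop_iii' TYPE('a) \<Longrightarrow> w_star_SD2P TYPE('a)" by (rule prop_iii'_imp_w_star_SD2P)
  moreover have "w_star_SD2P TYPE('a) \<Longrightarrow> octahedral TYPE('a)"
    using octahedral_finite_imp_octahedral w_star_SD2P_imp_octahedral_finite[OF assms] by blast
  ultimately show ?thesis by blast
qed

end
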